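(* Let $d\ge2$, let $A,B$ be $d$-dimensional systems, and let $\rho_{AB}=\dfrac{\mathbb I_{AB}+\beta W}{d^2+d\beta}$ with $\beta\in\mathbb R$, $|\beta|\le1$, where $W=\sum_{i,j}|i\rangle\langle j|\otimes|j\rangle\langle i|$ is the swap operator (a Werner state). Then $$Q^A_{\mathcal N}(\rho_{AB})=Q^{AB}_{\mathcal N}(\rho_{AB})=\frac{|\beta|(d-1)}{2(d+\beta)}.$$
   Context: The negativity of a bipartite state $\tau_{X:Y}$ is $\mathcal N_{X:Y}(\tau)=(\|\tau^\Gamma\|_1-1)/2$ with $\tau^\Gamma$ the partial transpose on one party and $\|\cdot\|_1$ the trace norm. For a system $S$ of dimension $m$ with orthonormal basis $\{|s_k\rangle\}$, the measurement interaction is the isometry $V_S:S\to S\otimes S'$ ($S'$ $m$-dimensional with computational basis $\{|k\rangle\}$), $V_S|s_k\rangle=|s_k\rangle|k\rangle$. One-sided negativity of quantumness: $Q^A_{\mathcal N}(\rho_{AB})=\min\mathcal N_{AB:A'}\big((V_A\otimes\mathbb I_B)\rho_{AB}(V_A\otimes\mathbb I_B)^\dagger\big)$ over orthonormal bases of $A$. Two-sided: $Q^{AB}_{\mathcal N}(\rho_{AB})=\min\mathcal N_{AB:A'B'}\big((V_A\otimes V_B)\rho_{AB}(V_A\otimes V_B)^\dagger\big)$ over orthonormal bases of $A$ and $B$. *)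

theory Defs
  imports Complex_Main "HOL-Library.Cardinality"
begin

text \<open>Operators on finite-dimensional Hilbert spaces are represented as complex
kernels indexed by finite types: an operator from C^'b to C^'a is a function
'a => 'b => complex (entry at row i, column j). Tensor products of systems
correspond to product index types.\<close>

type_synonym ('a, 'b) op = "'a \<Rightarrow> 'b \<Rightarrow> complex"

definition mmult :: "('a, 'b::finite) op \<Rightarrow> ('b, 'c) op \<Rightarrow> ('a, 'c) op" where
  "mmult M N = (\<lambda>i j. \<Sum>k\<in>UNIV. M i k * N k j)"

definition adjoint :: "('a, 'b) op \<Rightarrow> ('b, 'a) op" where
  "adjoint M = (\<lambda>i j. cnj (M j i))"

definition idop :: "('a, 'a) op" where
  "idop = (\<lambda>i j. if i = j then 1 else 0)"

definition kron :: "('a, 'b) op \<Rightarrow> ('c, 'd) op \<Rightarrow> ('a \<times> 'c, 'b \<times> 'd) op" where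
  "kron M N = (\<lambda>(i, k) (j, l). M i j * N k l)"

definition mtrace :: "('a::finite, 'a) op \<Rightarrow> complex" where
  "mtrace M = (\<Sum>i\<in>UNIV. M i i)"

definition psd :: "('a::finite, 'a) op \<Rightarrow> bool" where
  "psd P \<longleftrightarrow> (\<forall>i j. P i j = cnj (P j i)) \<and>
     (\<forall>v. 0 \<le> Re (\<Sum>i\<in>UNIV. \<Sum>j\<in>UNIV. cnj (v i) * P i j * v j))"

definition trace_norm :: "('a::finite, 'a) op \<Rightarrow> real" where
  "trace_norm M = Re (mtrace (THE P. psd P \<and> mmult P P = mmult (adjoint M) M))"

definition ptrans :: "('x \<times> 'y, 'x \<times> 'y) op \<Rightarrow> ('x \<times> 'y, 'x \<times> 'y) op" where
  "ptrans M = (\<lambda>(x, y) (x', y'). M (x, y') (x', y))"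

definition negativity :: "('x::finite \<times> 'y::finite, 'x \<times> 'y) op \<Rightarrow> real" where
  "negativity M = (trace_norm (ptrans M) - 1) / 2"

text \<open>Orthonormal basis of C^'d: s k is the k-th basis vector, with components s k i.\<close>
definition orthonormal_basis :: "('d::finite \<Rightarrow> 'd \<Rightarrow> complex) \<Rightarrow> bool" where
  "orthonormal_basis s \<longleftrightarrow>
     (\<forall>k l. (\<Sum>i\<in>UNIV. cnj (s k i) * s l i) = (if k = l then 1 else 0))"

text \<open>Measurement interaction V_S : S -> S (x) S', V_S |s_k> = |s_k>|k>, i.e.
V_S = sum_k |s_k>|k> <s_k|. Output index (i, k) with i in S and k in S'.\<close>
definition meas_iso :: "('d::finite \<Rightarrow> 'd \<Rightarrow> complex) \<Rightarrow> ('d \<times> 'd, 'd) op" where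
  "meas_iso s = (\<lambda>(i, k) j. s k i * cnj (s k j))"

text \<open>(V_A (x) I_B) rho (V_A (x) I_B)^dagger, regarded as a bipartite state AB : A'.\<close>
definition meas_A_state ::
  "('d::finite \<Rightarrow> 'd \<Rightarrow> complex) \<Rightarrow> ('d \<times> 'e::finite, 'd \<times> 'e) op
     \<Rightarrow> (('d \<times> 'e) \<times> 'd, ('d \<times> 'e) \<times> 'd) op" where
  "meas_A_state s \<rho> =
     (let V = kron (meas_iso s) (idop :: ('e, 'e) op);
          \<tau> = mmult (mmult V \<rho>) (adjoint V)
      in (\<lambda>((a, b), k) ((a', b'), k'). \<tau> ((a, k), b) ((a', k'), b')))"

text \<open>(V_A (x) V_B) rho (V_A (x) V_B)^dagger, regarded as a bipartite state AB : A'B'.\<close>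
definition meas_AB_state ::
  "('d::finite \<Rightarrow> 'd \<Rightarrow> complex) \<Rightarrow> ('e::finite \<Rightarrow> 'e \<Rightarrow> complex) \<Rightarrow> ('d \<times> 'e, 'd \<times> 'e) op
     \<Rightarrow> (('d \<times> 'e) \<times> ('d \<times> 'e), ('d \<times> 'e) \<times> ('d \<times> 'e)) op" where
  "meas_AB_state s t \<rho> =
     (let V = kron (meas_iso s) (meas_iso t);
          \<tau> = mmult (mmult V \<rho>) (adjoint V)
      in (\<lambda>((a, b), (k, l)) ((a', b'), (k', l')). \<tau> ((a, k), (b, l)) ((a', k'), (b', l'))))"

text \<open>One-sided and two-sided negativity of quantumness (minimum over orthonormal
bases, rendered as infimum).\<close>
definition QA_neg :: "('d::finite \<times> 'e::finite, 'd \<times> 'e) op \<Rightarrow> real" where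
  "QA_neg \<rho> = (INF s \<in> {s. orthonormal_basis s}. negativity (meas_A_state s \<rho>))"

definition QAB_neg :: "('d::finite \<times> 'e::finite, 'd \<times> 'e) op \<Rightarrow> real" where
  "QAB_neg \<rho> = (INF st \<in> {(s, t). orthonormal_basis s \<and> orthonormal_basis t}.
                   negativity (meas_AB_state (fst st) (snd st) \<rho>))"

definition swap_op :: "('d \<times> 'd, 'd \<times> 'd) op" where
  "swap_op = (\<lambda>(a, b) (c, e). if a = e \<and> b = c then 1 else 0)"

definition werner :: "real \<Rightarrow> ('d::finite \<times> 'd, 'd \<times> 'd) op" where
  "werner \<beta> = (\<lambda>x y. (idop x y + complex_of_real \<beta> * swap_op x y) /
     complex_of_real ((real CARD('d))\<^sup>2 + real CARD('d) * \<beta>))"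

end

theory Submission
  imports "HOL-Analysis.Cartesian_Space" Defs
begin

text \<open>Measuring in orthonormal bases \<open>s\<close> of \<open>A\<close> and \<open>t\<close> of \<open>B\<close> and then partially transposing gives,
  up to conjugation by a unitary, a rearrangement of the matrix of \<open>\<rho>\<close> in the product basis
  \<open>s \<otimes> t\<close> that has at most one nonzero entry in each row and column. The trace norm of such a
  matrix is the sum of the moduli of its entries, because \<open>M\<^sup>\<dagger>M\<close> is diagonal. For the Werner
  state this sum is \<open>1 + |\<beta>|(T\<^sup>2 - d)/(d\<^sup>2 + d\<beta>)\<close> with \<open>T = \<Sum>\<^sub>k\<^sub>,\<^sub>n |\<langle>s\<^sub>k, t\<^sub>n\<rangle>|\<close>, and \<open>T \<ge> d\<close>
  with equality for \<open>t = s\<close>. The one-sided measurement in basis \<open>s\<close> gives the same value as the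
  two-sided one with \<open>t = s\<close>, since the Werner state is invariant under \<open>U \<otimes> U\<close>.\<close>

section \<open>Matrix algebra on kernels\<close>

lemma sum_UNIV_prod:
  "(\<Sum>x\<in>(UNIV::('a::finite \<times> 'b::finite) set). f x) = (\<Sum>a\<in>UNIV. \<Sum>b\<in>UNIV. f (a, b))"
  by (simp add: UNIV_Times_UNIV[symmetric] sum.cartesian_product del: UNIV_Times_UNIV)

lemma sum_swap_pairs:
  "(\<Sum>a\<in>A. \<Sum>b\<in>B. \<Sum>c\<in>C. \<Sum>d\<in>D. f a b c d) = (\<Sum>c\<in>C. \<Sum>d\<in>D. \<Sum>a\<in>A. \<Sum>b\<in>B. f a b c d)"
proof -
  have "(\<Sum>a\<in>A. \<Sum>b\<in>B. \<Sum>c\<in>C. \<Sum>d\<in>D. f a b c d) = (\<Sum>a\<in>A. \<Sum>c\<in>C. \<Sum>b\<in>B. \<Sum>d\<in>D. f a b c d)"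
    by (rule sum.cong[OF refl], rule sum.swap)
  also have "\<dots> = (\<Sum>c\<in>C. \<Sum>a\<in>A. \<Sum>d\<in>D. \<Sum>b\<in>B. f a b c d)"
    by (subst sum.swap) (rule sum.cong[OF refl], rule sum.cong[OF refl], rule sum.swap)
  also have "\<dots> = (\<Sum>c\<in>C. \<Sum>d\<in>D. \<Sum>a\<in>A. \<Sum>b\<in>B. f a b c d)"
    by (rule sum.cong[OF refl], rule sum.swap)
  finally show ?thesis .
qed

lemma sum_cross_products_eq_square:
  "(\<Sum>k\<in>A. \<Sum>l\<in>B. \<Sum>k'\<in>A. \<Sum>l'\<in>B. f k l' * f k' l) = (\<Sum>k\<in>A. \<Sum>l\<in>B. f k l :: 'a::comm_semiring_1)\<^sup>2"
proof -
  have "(\<Sum>k\<in>A. \<Sum>l\<in>B. f k l)\<^sup>2 = (\<Sum>k\<in>A. \<Sum>k'\<in>A. \<Sum>l'\<in>B. \<Sum>l\<in>B. f k l' * f k' l)"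
    by (simp add: power2_eq_square sum_product)
  also have "\<dots> = (\<Sum>k\<in>A. \<Sum>l\<in>B. \<Sum>k'\<in>A. \<Sum>l'\<in>B. f k l' * f k' l)"
  proof (rule sum.cong[OF refl])
    fix k
    have "(\<Sum>k'\<in>A. \<Sum>l'\<in>B. \<Sum>l\<in>B. f k l' * f k' l) = (\<Sum>k'\<in>A. \<Sum>l\<in>B. \<Sum>l'\<in>B. f k l' * f k' l)"
      by (rule sum.cong[OF refl], rule sum.swap)
    also have "\<dots> = (\<Sum>l\<in>B. \<Sum>k'\<in>A. \<Sum>l'\<in>B. f k l' * f k' l)"
      by (rule sum.swap)
    finally show "(\<Sum>k'\<in>A. \<Sum>l'\<in>B. \<Sum>l\<in>B. f k l' * f k' l) = (\<Sum>l\<in>B. \<Sum>k'\<in>A. \<Sum>l'\<in>B. f k l' * f k' l)" .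
  qed
  finally show ?thesis ..
qed

lemma if_zero_mult [simp]: "(if P then y else 0) * (x :: 'a::mult_zero) = (if P then y * x else 0)"
  by simp

lemma mult_if_zero [simp]: "(x :: 'a::mult_zero) * (if P then y else 0) = (if P then x * y else 0)"
  by simp

lemma cnj_if_zero [simp]: "cnj (if P then z else 0) = (if P then cnj z else 0)"
  by simp

lemma sum_if_zero_const [simp]:
  "(\<Sum>x\<in>A. if P then f x else 0) = (if P then sum f A else (0 :: 'a::comm_monoid_add))"
  by simp

lemma norm_if_zero [simp]: "norm (if P then z else 0) = (if P then norm z else 0)"
  by simp

lemma if_conj_zero [simp]:
  "(if P \<and> Q then x else 0) = (if P then if Q then x else 0 else (0 :: 'a::zero))"
  by simp

lemma mmult_assoc: "mmult (mmult A (B :: ('b::finite, 'c::finite) op)) C = mmult A (mmult B C)"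
  unfolding mmult_def
proof (intro ext)
  fix i j
  show "(\<Sum>k\<in>UNIV. (\<Sum>l\<in>UNIV. A i l * B l k) * C k j) = (\<Sum>l\<in>UNIV. A i l * (\<Sum>k\<in>UNIV. B l k * C k j))"
    by (simp add: sum_distrib_left sum_distrib_right mult.assoc) (rule sum.swap)
qed

lemma adjoint_mmult: "adjoint (mmult A B) = mmult (adjoint B) (adjoint A)"
  unfolding mmult_def adjoint_def by (auto intro!: ext simp: mult.commute)

lemma adjoint_adjoint [simp]: "adjoint (adjoint A) = A"
  unfolding adjoint_def by simp

lemma mmult_idop_left [simp]: "mmult idop A = A"
  unfolding mmult_def idop_def by (simp add: fun_eq_iff)

lemma mmult_idop_right [simp]: "mmult A idop = A"
  unfolding mmult_def idop_def by (simp add: fun_eq_iff)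

lemma mtrace_mmult_commute: "mtrace (mmult (A :: ('a::finite, 'b::finite) op) B) = mtrace (mmult B A)"
  unfolding mtrace_def mmult_def by (subst sum.swap) (simp add: mult.commute)

definition cinner :: "('a::finite \<Rightarrow> complex) \<Rightarrow> ('a \<Rightarrow> complex) \<Rightarrow> complex" where
  "cinner u v = (\<Sum>i\<in>UNIV. cnj (u i) * v i)"

definition apply_op :: "('a, 'b::finite) op \<Rightarrow> ('b \<Rightarrow> complex) \<Rightarrow> 'a \<Rightarrow> complex" where
  "apply_op M v = (\<lambda>i. \<Sum>j\<in>UNIV. M i j * v j)"

lemma cnj_mult_self: "cnj z * z = complex_of_real ((cmod z)\<^sup>2)"
  by (metis complex_norm_square mult.commute)

lemma cinner_self: "cinner v v = of_real (\<Sum>i\<in>UNIV. (cmod (v i))\<^sup>2)"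
  unfolding cinner_def by (simp only: cnj_mult_self of_real_sum)

lemma cinner_self_eq_0_iff: "cinner v v = 0 \<longleftrightarrow> v = (\<lambda>i. 0)"
  unfolding cinner_self of_real_eq_0_iff by (simp add: sum_nonneg_eq_0_iff fun_eq_iff)

lemma cnj_cinner: "cnj (cinner u v) = cinner v u"
  unfolding cinner_def by (simp add: mult.commute)

lemma cinner_apply_op: "cinner u (apply_op M v) = cinner (apply_op (adjoint M) u) v"
  unfolding cinner_def apply_op_def adjoint_def
  by (simp add: sum_distrib_left sum_distrib_right mult_ac) (rule sum.swap)

lemma apply_op_mmult: "apply_op (mmult A B) v = apply_op A (apply_op B v)"
  unfolding apply_op_def mmult_def
  by (rule ext, simp add: sum_distrib_left sum_distrib_right mult_ac, rule sum.swap)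

lemma apply_op_idop [simp]: "apply_op idop v = v"
  unfolding apply_op_def idop_def by simp

lemma apply_op_diff_scaled:
  "apply_op M (\<lambda>i. u i - c * v i) = (\<lambda>i. apply_op M u i - c * apply_op M v i)"
  unfolding apply_op_def by (simp add: fun_eq_iff algebra_simps sum_subtractf sum_distrib_left)

lemma cinner_diff_scaled_left: "cinner (\<lambda>i. u i - c * v i) w = cinner u w - cnj c * cinner v w"
  unfolding cinner_def by (simp add: algebra_simps sum_subtractf sum_distrib_left)

lemma cinner_diff_scaled_right: "cinner w (\<lambda>i. u i - c * v i) = cinner w u - c * cinner w v"
  unfolding cinner_def by (simp add: algebra_simps sum_subtractf sum_distrib_left)

section \<open>Positive semidefinite square roots and the trace norm\<close>

lemma psd_iff: "psd P \<longleftrightarrow> adjoint P = P \<and> (\<forall>v. 0 \<le> Re (cinner v (apply_op P v)))"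
proof -
  have "cinner v (apply_op P v) = (\<Sum>i\<in>UNIV. \<Sum>j\<in>UNIV. cnj (v i) * P i j * v j)" for v
    unfolding cinner_def apply_op_def by (simp add: sum_distrib_left mult.assoc)
  moreover have "adjoint P = P \<longleftrightarrow> (\<forall>i j. P i j = cnj (P j i))"
    unfolding adjoint_def fun_eq_iff by (metis complex_cnj_cnj)
  ultimately show ?thesis unfolding psd_def by simp
qed

lemma adjoint_idop [simp]: "adjoint idop = idop"
  unfolding adjoint_def idop_def by (auto simp: fun_eq_iff)

lemma psd_idop: "psd idop"
  by (simp add: psd_iff cinner_self sum_nonneg)

lemma psd_diag:
  assumes "\<And>i. 0 \<le> c i"
  shows "psd (\<lambda>i j. if i = j then complex_of_real (c i) else 0)"
proof -
  let ?D = "\<lambda>i j. if i = j then complex_of_real (c i) else 0"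
  have "cinner v (apply_op ?D v) = (\<Sum>i\<in>UNIV. of_real (c i) * (cnj (v i) * v i))" for v
    unfolding cinner_def apply_op_def by (simp add: mult_ac)
  then have "cinner v (apply_op ?D v) = of_real (\<Sum>i\<in>UNIV. c i * (cmod (v i))\<^sup>2)" for v
    by (simp only: cnj_mult_self of_real_sum of_real_mult)
  moreover have "adjoint ?D = ?D" unfolding adjoint_def by (auto simp: fun_eq_iff)
  ultimately show ?thesis using assms by (simp add: psd_iff sum_nonneg)
qed

lemma psd_conj:
  assumes "psd P"
  shows "psd (mmult (mmult U P) (adjoint U))"
proof -
  have herm: "adjoint P = P" and nonneg: "\<And>v. 0 \<le> Re (cinner v (apply_op P v))"
    using assms by (auto simp: psd_iff)
  have "cinner v (apply_op (mmult (mmult U P) (adjoint U)) v)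
      = cinner (apply_op (adjoint U) v) (apply_op P (apply_op (adjoint U) v))" for v
    by (simp add: apply_op_mmult cinner_apply_op)
  then show ?thesis
    using nonneg by (simp add: psd_iff adjoint_mmult herm mmult_assoc)
qed

lemma psd_form_eq_0_imp_apply_eq_0:
  assumes "psd P" and "Re (cinner w (apply_op P w)) = 0"
  shows "apply_op P w = (\<lambda>i. 0)"
proof -
  have herm: "adjoint P = P" and nonneg: "\<And>v. 0 \<le> Re (cinner v (apply_op P v))"
    using assms(1) by (auto simp: psd_iff)
  define y where "y = apply_op P w"
  define S where "S = Re (cinner y y)"
  define Q where "Q = Re (cinner y (apply_op P y))"
  have "cinner w (apply_op P y) = cinner y y"
    by (simp add: cinner_apply_op herm y_def)
  then have "cinner (\<lambda>i. w i - of_real t * y i) (apply_op P (\<lambda>i. w i - of_real t * y i))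
      = cinner w (apply_op P w) - 2 * of_real t * cinner y y + (of_real t)\<^sup>2 * cinner y (apply_op P y)"
    for t :: real
    by (simp add: apply_op_diff_scaled cinner_diff_scaled_left cinner_diff_scaled_right
        flip: y_def) (simp add: algebra_simps power2_eq_square)
  then have expand: "0 \<le> t\<^sup>2 * Q - 2 * t * S" for t :: real
    \<comment> \<open>perturbing \<open>w\<close> along \<open>y = P w\<close> makes the form negative for small \<open>t > 0\<close> unless \<open>S = \<parallel>y\<parallel>\<^sup>2 = 0\<close>\<close>
    using nonneg[of "\<lambda>i. w i - of_real t * y i"] assms(2) by (simp add: S_def Q_def)
  have "0 \<le> S" "0 \<le> Q" using nonneg by (simp_all add: S_def Q_def cinner_self sum_nonneg)
  define t where "t = S / (Q + 1)"
  have "0 \<le> t" "t * Q \<le> S"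
    using \<open>0 \<le> S\<close> \<open>0 \<le> Q\<close> by (simp_all add: t_def field_simps)
  then have "t * Q * t \<le> S * t"
    by (simp add: mult_right_mono)
  then have "t\<^sup>2 * Q - 2 * t * S \<le> - (t * S)"
    by (simp add: power2_eq_square algebra_simps)
  with expand[of t] have "S * S / (Q + 1) \<le> 0"
    by (simp add: t_def)
  then have "S * S \<le> 0"
    using \<open>0 \<le> Q\<close> by (simp add: divide_le_0_iff add_nonneg_pos)
  then have "S = 0"
    by (meson antisym mult_eq_0_iff zero_le_square)
  then have "cinner y y = 0" by (simp add: S_def cinner_self)
  then show ?thesis by (simp add: cinner_self_eq_0_iff y_def)
qed

lemma mtrace_adjoint_conj:
  "mtrace (mmult (mmult (adjoint X) P) X) = (\<Sum>j\<in>UNIV. cinner (\<lambda>i. X i j) (apply_op P (\<lambda>i. X i j)))"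
  unfolding mtrace_def mmult_def adjoint_def cinner_def apply_op_def
  by (simp add: sum_distrib_left sum_distrib_right mult_ac) (rule sum.cong[OF refl], rule sum.swap)

lemma psd_mtrace_adjoint_conj_nonneg: "psd P \<Longrightarrow> 0 \<le> Re (mtrace (mmult (mmult (adjoint X) P) X))"
  by (simp add: mtrace_adjoint_conj psd_iff sum_nonneg)

lemma psd_mtrace_adjoint_conj_eq_0:
  assumes "psd P" and "Re (mtrace (mmult (mmult (adjoint X) P) X)) = 0"
  shows "mmult P X = (\<lambda>i j. 0)"
proof -
  have "(\<Sum>j\<in>UNIV. Re (cinner (\<lambda>i. X i j) (apply_op P (\<lambda>i. X i j)))) = 0"
    using assms(2) by (simp add: mtrace_adjoint_conj)
  then have "Re (cinner (\<lambda>i. X i j) (apply_op P (\<lambda>i. X i j))) = 0" for j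
    using assms(1) by (simp add: sum_nonneg_eq_0_iff psd_iff)
  then have "apply_op P (\<lambda>i. X i j) = (\<lambda>i. 0)" for j
    using assms(1) psd_form_eq_0_imp_apply_eq_0 by blast
  then show ?thesis
    unfolding apply_op_def mmult_def by metis
qed

text \<open>If \<open>P\<^sup>2 = R\<^sup>2\<close> and \<open>D = P - R\<close>, then \<open>PD + DR = 0\<close>, so the nonnegative numbers
  \<open>tr (DPD)\<close> and \<open>tr (DRD) = tr (DDR)\<close> add up to zero. Hence \<open>PD = RD = 0\<close> and \<open>D\<^sup>2 = 0\<close>.\<close>

lemma psd_sqrt_unique:
  assumes P: "psd P" and R: "psd R" and sq: "mmult P P = mmult R R"
  shows "P = R"
proof -
  define D where "D = (\<lambda>i j. P i j - R i j)"
  have herm: "adjoint D = D"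
    using P R by (auto simp: psd_iff D_def adjoint_def fun_eq_iff)
  have cancel: "mmult P D i j + mmult D R i j = 0" for i j
    using fun_cong[OF fun_cong[OF sq, of i], of j]
    unfolding mmult_def D_def by (simp add: algebra_simps sum_subtractf)
  have "mtrace (mmult D (mmult P D)) + mtrace (mmult D (mmult D R))
      = (\<Sum>i\<in>UNIV. \<Sum>k\<in>UNIV. D i k * (mmult P D k i + mmult D R k i))"
    unfolding mtrace_def mmult_def[of D "mmult P D"] mmult_def[of D "mmult D R"]
    by (simp add: sum.distrib distrib_left)
  also have "\<dots> = 0"
    by (simp add: cancel)
  moreover have "mtrace (mmult D (mmult D R)) = mtrace (mmult (mmult D R) D)"
    by (rule mtrace_mmult_commute)
  ultimately have "mtrace (mmult (mmult (adjoint D) P) D) + mtrace (mmult (mmult (adjoint D) R) D) = 0"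
    by (simp add: herm mmult_assoc)
  then have "Re (mtrace (mmult (mmult (adjoint D) P) D)) + Re (mtrace (mmult (mmult (adjoint D) R) D)) = 0"
    by (metis plus_complex.sel(1) zero_complex.sel(1))
  with psd_mtrace_adjoint_conj_nonneg[OF P, of D] psd_mtrace_adjoint_conj_nonneg[OF R, of D]
  have "mmult P D = (\<lambda>i j. 0)" "mmult R D = (\<lambda>i j. 0)"
    using psd_mtrace_adjoint_conj_eq_0[OF P, of D] psd_mtrace_adjoint_conj_eq_0[OF R, of D] by auto
  then have "mmult D D = (\<lambda>i j. 0)"
    unfolding mmult_def D_def by (simp add: fun_eq_iff left_diff_distrib sum_subtractf)
  then have "mmult idop D = (\<lambda>i j. 0)"
    by (intro psd_mtrace_adjoint_conj_eq_0[OF psd_idop]) (simp add: herm mtrace_def)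
  then show ?thesis by (simp add: D_def fun_eq_iff)
qed

lemma trace_norm_eqI:
  assumes "psd P" and "mmult P P = mmult (adjoint M) M"
  shows "trace_norm M = Re (mtrace P)"
proof -
  have "(THE P. psd P \<and> mmult P P = mmult (adjoint M) M) = P"
  proof (rule the_equality)
    show "psd R \<and> mmult R R = mmult (adjoint M) M \<Longrightarrow> R = P" for R
      using assms by (metis psd_sqrt_unique)
  qed (use assms in simp)
  then show ?thesis unfolding trace_norm_def by simp
qed

lemma mmult_isometry_cancel:
  assumes "mmult (adjoint U) U = idop"
  shows "mmult (adjoint U) (mmult U Y) = Y"
  by (simp add: assms flip: mmult_assoc)

lemma trace_norm_isometry_conj:
  fixes U :: "('b::finite, 'a::finite) op" and M P :: "('a, 'a) op"
  assumes U: "mmult (adjoint U) U = idop" and "psd P" and "mmult P P = mmult (adjoint M) M"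
  shows "trace_norm (mmult (mmult U M) (adjoint U)) = Re (mtrace P)"
proof -
  have psd: "psd (mmult (mmult U P) (adjoint U))"
    using assms(2) by (rule psd_conj)
  have "mmult (mmult (mmult U P) (adjoint U)) (mmult (mmult U P) (adjoint U))
      = mmult (mmult U (mmult P P)) (adjoint U)"
    by (simp add: mmult_assoc mmult_isometry_cancel[OF U])
  also have "\<dots> = mmult (adjoint (mmult (mmult U M) (adjoint U))) (mmult (mmult U M) (adjoint U))"
    by (simp add: assms(3) adjoint_mmult mmult_assoc mmult_isometry_cancel[OF U])
  finally have "trace_norm (mmult (mmult U M) (adjoint U)) = Re (mtrace (mmult (mmult U P) (adjoint U)))"
    by (rule trace_norm_eqI[OF psd])
  also have "mtrace (mmult (mmult U P) (adjoint U)) = mtrace P"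
    by (simp add: mtrace_mmult_commute[of "mmult U P"] mmult_isometry_cancel[OF U])
  finally show ?thesis .
qed

definition partial_monomial :: "('a, 'b) op \<Rightarrow> bool" where
  "partial_monomial M \<longleftrightarrow>
     (\<forall>i j j'. M i j \<noteq> 0 \<longrightarrow> M i j' \<noteq> 0 \<longrightarrow> j = j') \<and>
     (\<forall>i i' j. M i j \<noteq> 0 \<longrightarrow> M i' j \<noteq> 0 \<longrightarrow> i = i')"

definition entrywise_l1 :: "('a::finite, 'b::finite) op \<Rightarrow> real" where
  "entrywise_l1 M = (\<Sum>i\<in>UNIV. \<Sum>j\<in>UNIV. cmod (M i j))"

lemma sum_UNIV_eq_single:
  assumes "\<And>i. i \<noteq> i0 \<Longrightarrow> g i = 0"
  shows "(\<Sum>i\<in>(UNIV :: 'a::finite set). g i) = (g i0 :: 'b::comm_monoid_add)"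
  using assms by (simp add: sum.remove[of UNIV i0] sum.neutral)

lemma sum_norm_power2_single_nonzero:
  fixes f :: "'a::finite \<Rightarrow> complex"
  assumes "\<And>i i'. f i \<noteq> 0 \<Longrightarrow> f i' \<noteq> 0 \<Longrightarrow> i = i'"
  shows "(\<Sum>i\<in>UNIV. cmod (f i))\<^sup>2 = (\<Sum>i\<in>UNIV. (cmod (f i))\<^sup>2)"
proof (cases "\<exists>i0. f i0 \<noteq> 0")
  case True
  then obtain i0 where "f i0 \<noteq> 0" by blast
  then have "f i = 0" if "i \<noteq> i0" for i
    using assms that by blast
  then show ?thesis by (simp add: sum_UNIV_eq_single[of i0])
qed simp

text \<open>For a matrix with at most one nonzero entry in each row and each column, \<open>M\<^sup>\<dagger> M\<close> is diagonal
  and its square root is the diagonal matrix of the column sums of \<open>\<bar>M\<bar>\<close>.\<close>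

lemma trace_norm_partial_monomial_conj:
  fixes U :: "('b::finite, 'a::finite) op" and M :: "('a, 'a) op"
  assumes M: "partial_monomial M" and U: "mmult (adjoint U) U = idop"
  shows "trace_norm (mmult (mmult U M) (adjoint U)) = entrywise_l1 M"
proof -
  define c where "c j = (\<Sum>i\<in>UNIV. cmod (M i j))" for j
  define P where "P = (\<lambda>j j'. if j = j' then complex_of_real (c j) else 0)"
  have rows: "M i j \<noteq> 0 \<Longrightarrow> M i j' \<noteq> 0 \<Longrightarrow> j = j'"
    and cols: "M i j \<noteq> 0 \<Longrightarrow> M i' j \<noteq> 0 \<Longrightarrow> i = i'" for i i' j j'
    using M unfolding partial_monomial_def by blast+
  have "psd P"
    unfolding P_def by (rule psd_diag) (simp add: c_def sum_nonneg)
  moreover have "mmult P P j j' = mmult (adjoint M) M j j'" for j j'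
  proof (cases "j = j'")
    case True
    have "(c j)\<^sup>2 = (\<Sum>i\<in>UNIV. (cmod (M i j))\<^sup>2)"
      unfolding c_def using cols by (rule sum_norm_power2_single_nonzero)
    then show ?thesis
      using True by (simp add: P_def mmult_def adjoint_def cnj_mult_self power2_eq_square flip: of_real_mult)
  next
    case False
    then have zero: "cnj (M i j) * M i j' = 0" for i
      using rows by auto
    show ?thesis
      using False by (simp add: P_def mmult_def adjoint_def zero)
  qed
  ultimately have "trace_norm (mmult (mmult U M) (adjoint U)) = Re (mtrace P)"
    by (intro trace_norm_isometry_conj[OF U]) (auto simp: fun_eq_iff)
  also have "Re (mtrace P) = entrywise_l1 M"
    unfolding mtrace_def P_def c_def entrywise_l1_def by simp (rule sum.swap)
  finally show ?thesis .
qed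

section \<open>Orthonormal bases\<close>

definition basis_op :: "('k \<Rightarrow> 'a \<Rightarrow> complex) \<Rightarrow> ('a, 'k) op" where
  "basis_op s = (\<lambda>i k. s k i)"

lemma orthonormal_basis_cinner:
  "orthonormal_basis s \<Longrightarrow> cinner (s k) (s l) = (if k = l then 1 else 0)"
  unfolding orthonormal_basis_def cinner_def by blast

lemma orthonormal_basis_isometry:
  "orthonormal_basis s \<Longrightarrow> mmult (adjoint (basis_op s)) (basis_op s) = idop"
  unfolding orthonormal_basis_def mmult_def adjoint_def basis_op_def idop_def by (simp add: fun_eq_iff)

text \<open>Completeness: a square matrix with a left inverse is invertible.\<close>

lemma orthonormal_basis_coisometry:
  fixes s :: "'d::finite \<Rightarrow> 'd \<Rightarrow> complex"
  assumes "orthonormal_basis s"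
  shows "mmult (basis_op s) (adjoint (basis_op s)) = idop"
proof -
  define A :: "complex^'d^'d" where "A = (\<chi> k i. cnj (s k i))"
  define A' :: "complex^'d^'d" where "A' = (\<chi> i k. s k i)"
  have "A ** A' = mat 1"
    using assms unfolding orthonormal_basis_def
    by (simp add: vec_eq_iff matrix_matrix_mult_def mat_def A_def A'_def)
  then have "A' ** A = mat 1"
    by (rule matrix_left_right_inverse1)
  then have "(A' ** A) $ i $ j = (mat 1 :: complex^'d^'d) $ i $ j" for i j
    by simp
  then show ?thesis
    by (simp add: fun_eq_iff matrix_matrix_mult_def mat_def A_def A'_def mmult_def adjoint_def basis_op_def idop_def)
qed

lemma orthonormal_basis_idop: "orthonormal_basis idop"
  unfolding orthonormal_basis_def idop_def by simp

lemma parseval: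
  assumes "orthonormal_basis s"
  shows "(\<Sum>k\<in>UNIV. (cmod (cinner (s k) u))\<^sup>2) = (\<Sum>i\<in>UNIV. (cmod (u i))\<^sup>2)"
proof -
  have coeff: "apply_op (adjoint (basis_op s)) u = (\<lambda>k. cinner (s k) u)"
    unfolding apply_op_def adjoint_def basis_op_def cinner_def by simp
  have "cinner (\<lambda>k. cinner (s k) u) (\<lambda>k. cinner (s k) u) = cinner u u"
    unfolding coeff[symmetric] cinner_apply_op[symmetric]
    by (simp flip: apply_op_mmult add: orthonormal_basis_coisometry[OF assms])
  then show ?thesis
    by (simp add: cinner_self del: of_real_sum of_real_power)
qed

lemma orthonormal_basis_norm:
  "orthonormal_basis s \<Longrightarrow> (\<Sum>i\<in>UNIV. (cmod (s k i))\<^sup>2) = 1"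
  using orthonormal_basis_cinner[of s k k] by (simp add: cinner_self del: of_real_sum of_real_power)

lemma orthonormal_bases_overlap_le_1:
  assumes "orthonormal_basis s" and "orthonormal_basis t"
  shows "cmod (cinner (s k) (t n)) \<le> 1"
proof -
  have "(cmod (cinner (s k) (t n)))\<^sup>2 \<le> (\<Sum>k\<in>UNIV. (cmod (cinner (s k) (t n)))\<^sup>2)"
    by (rule member_le_sum) auto
  also have "\<dots> = 1"
    by (simp add: parseval[OF assms(1)] orthonormal_basis_norm[OF assms(2)])
  finally show ?thesis
    by (simp add: power_le_one_iff)
qed

lemma adjoint_kron: "adjoint (kron A B) = kron (adjoint A) (adjoint B)"
  unfolding adjoint_def kron_def by (auto simp: fun_eq_iff)

lemma mmult_kron: "mmult (kron A B) (kron C D) = kron (mmult A C) (mmult B D)"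
  unfolding mmult_def kron_def by (auto simp: fun_eq_iff sum_UNIV_prod sum_product mult_ac)

lemma kron_idop: "kron idop idop = idop"
  unfolding kron_def idop_def by (auto simp: fun_eq_iff)

definition basis_change_op ::
  "('k \<Rightarrow> 'a \<Rightarrow> complex) \<Rightarrow> ('l \<Rightarrow> 'b \<Rightarrow> complex) \<Rightarrow> (('a \<times> 'b) \<times> 'e, ('k \<times> 'l) \<times> 'e) op" where
  "basis_change_op s t = kron (kron (basis_op s) (basis_op t)) idop"

lemma basis_change_op_isometry:
  fixes s :: "'a::finite \<Rightarrow> 'a \<Rightarrow> complex" and t :: "'b::finite \<Rightarrow> 'b \<Rightarrow> complex"
  assumes "orthonormal_basis s" and "orthonormal_basis t"
  shows "mmult (adjoint (basis_change_op s t)) (basis_change_op s t :: (('a \<times> 'b) \<times> 'e::finite, _) op) = idop"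
  unfolding basis_change_op_def
  by (simp add: adjoint_kron mmult_kron kron_idop orthonormal_basis_isometry assms)

lemma basis_change_op_conj_apply:
  "mmult (mmult (basis_change_op s t) X) (adjoint (basis_change_op s t)) ((a, b), m) ((a', b'), m') =
     (\<Sum>k\<in>UNIV. \<Sum>l\<in>UNIV. \<Sum>k'\<in>UNIV. \<Sum>l'\<in>UNIV.
        s k a * t l b * X ((k, l), m) ((k', l'), m') * cnj (s k' a') * cnj (t l' b'))"
  unfolding basis_change_op_def mmult_def kron_def adjoint_def basis_op_def idop_def
  by (simp add: sum_UNIV_prod sum_distrib_left sum_distrib_right mult_ac) (rule sum_swap_pairs)

section \<open>Measured states in a product basis\<close>

definition tensor :: "('a \<Rightarrow> complex) \<Rightarrow> ('b \<Rightarrow> complex) \<Rightarrow> 'a \<times> 'b \<Rightarrow> complex" where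
  "tensor u v = (\<lambda>(i, j). u i * v j)"

definition in_basis ::
  "('k \<Rightarrow> 'a::finite \<Rightarrow> complex) \<Rightarrow> ('l \<Rightarrow> 'b::finite \<Rightarrow> complex) \<Rightarrow> ('a \<times> 'b, 'a \<times> 'b) op
     \<Rightarrow> ('k \<times> 'l, 'k \<times> 'l) op" where
  "in_basis s t \<rho> = (\<lambda>(k, l) (k', l'). cinner (tensor (s k) (t l)) (apply_op \<rho> (tensor (s k') (t l'))))"

lemma in_basis_eq_mmult:
  fixes s :: "'k \<Rightarrow> 'a::finite \<Rightarrow> complex" and t :: "'l \<Rightarrow> 'b::finite \<Rightarrow> complex"
  shows "in_basis s t \<rho> =
     mmult (mmult (adjoint (kron (basis_op s) (basis_op t))) \<rho>) (kron (basis_op s) (basis_op t))"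
proof (intro ext)
  fix x y :: "'k \<times> 'l"
  show "in_basis s t \<rho> x y =
    mmult (mmult (adjoint (kron (basis_op s) (basis_op t))) \<rho>) (kron (basis_op s) (basis_op t)) x y"
    unfolding in_basis_def mmult_def adjoint_def kron_def basis_op_def cinner_def apply_op_def tensor_def
    by (simp add: split_beta sum_distrib_left sum_distrib_right mult_ac) (rule sum.swap)
qed

lemma in_basis_idop [simp]: "in_basis idop idop \<rho> = \<rho>"
  unfolding in_basis_def cinner_def apply_op_def tensor_def idop_def
  by (simp add: fun_eq_iff sum_UNIV_prod)

lemma basis_op_idop [simp]: "basis_op idop = idop"
  unfolding basis_op_def idop_def by (auto simp: fun_eq_iff)

lemma in_basis_idop_right_expand:
  fixes s :: "'k::finite \<Rightarrow> 'a::finite \<Rightarrow> complex" and r :: "'b::finite \<Rightarrow> 'b \<Rightarrow> complex"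
  assumes "orthonormal_basis r"
  shows "in_basis s idop \<rho> (k, b) (k', b') =
    (\<Sum>l\<in>UNIV. \<Sum>l'\<in>UNIV. r l b * in_basis s r \<rho> (k, l) (k', l') * cnj (r l' b'))"
proof -
  let ?R = "kron (idop :: ('k, 'k) op) (basis_op r)"
  let ?B = "kron (basis_op s) (basis_op r)"
  have "mmult (mmult ?R (in_basis s r \<rho>)) (adjoint ?R)
      = mmult (mmult (adjoint (mmult ?B (adjoint ?R))) \<rho>) (mmult ?B (adjoint ?R))"
    by (simp add: in_basis_eq_mmult adjoint_mmult mmult_assoc)
  also have "mmult ?B (adjoint ?R) = kron (basis_op s) (basis_op idop)"
    by (simp add: adjoint_kron mmult_kron orthonormal_basis_coisometry[OF assms])
  finally have "in_basis s idop \<rho> = mmult (mmult ?R (in_basis s r \<rho>)) (adjoint ?R)"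
    by (simp add: in_basis_eq_mmult)
  then have "in_basis s idop \<rho> (k, b) (k', b') = mmult (mmult ?R (in_basis s r \<rho>)) (adjoint ?R) (k, b) (k', b')"
    by simp
  also have "\<dots> = (\<Sum>l\<in>UNIV. \<Sum>l'\<in>UNIV. r l b * in_basis s r \<rho> (k, l) (k', l') * cnj (r l' b'))"
    by (simp add: mmult_def kron_def adjoint_def basis_op_def idop_def sum_UNIV_prod
        sum_distrib_left sum_distrib_right mult_ac) (rule sum.swap)
  finally show ?thesis .
qed

lemma meas_A_state_apply:
  "meas_A_state s \<rho> ((a, b), k) ((a', b'), k') = s k a * cnj (s k' a') * in_basis s idop \<rho> (k, b) (k', b')"
  unfolding meas_A_state_def Let_def mmult_def kron_def meas_iso_def adjoint_def in_basis_def
    cinner_def apply_op_def tensor_def idop_def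
  by (simp add: sum_UNIV_prod sum_distrib_left sum_distrib_right mult_ac) (rule sum.swap)

lemma meas_AB_state_apply:
  "meas_AB_state s t \<rho> ((a, b), (k, l)) ((a', b'), (k', l')) =
     s k a * t l b * cnj (s k' a') * cnj (t l' b') * in_basis s t \<rho> (k, l) (k', l')"
  unfolding meas_AB_state_def Let_def mmult_def kron_def meas_iso_def adjoint_def in_basis_def
    cinner_def apply_op_def tensor_def
  by (simp add: sum_UNIV_prod sum_distrib_left sum_distrib_right mult_ac) (rule sum_swap_pairs)

lemma meas_AB_state_idop_apply:
  "meas_AB_state idop idop \<rho> ((a, b), (k, l)) ((a', b'), (k', l')) =
     (if k = a \<and> l = b \<and> k' = a' \<and> l' = b' then \<rho> (a, b) (a', b') else 0)"
  by (simp add: meas_AB_state_apply) (simp add: idop_def)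

lemma meas_A_state_idop_apply:
  "meas_A_state idop \<rho> ((a, b), k) ((a', b'), k') = (if k = a \<and> k' = a' then \<rho> (a, b) (a', b') else 0)"
  by (simp add: meas_A_state_apply) (simp add: idop_def)

lemma ptrans_meas_AB_state_basis_change:
  fixes s :: "'d::finite \<Rightarrow> 'd \<Rightarrow> complex" and t :: "'e::finite \<Rightarrow> 'e \<Rightarrow> complex"
  shows "ptrans (meas_AB_state s t \<rho>) =
     mmult (mmult (basis_change_op s t) (ptrans (meas_AB_state idop idop (in_basis s t \<rho>))))
       (adjoint (basis_change_op s t))"
proof (intro ext)
  fix x y :: "('d \<times> 'e) \<times> ('d \<times> 'e)"
  obtain a b k l a' b' k' l' where "x = ((a, b), (k, l))" and "y = ((a', b'), (k', l'))"
    by (metis prod.exhaust)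
  then show "ptrans (meas_AB_state s t \<rho>) x y =
      mmult (mmult (basis_change_op s t) (ptrans (meas_AB_state idop idop (in_basis s t \<rho>))))
        (adjoint (basis_change_op s t)) x y"
    by (simp add: ptrans_def basis_change_op_conj_apply meas_AB_state_idop_apply)
      (simp add: meas_AB_state_apply mult_ac)
qed

lemma ptrans_meas_A_state_basis_change:
  fixes s :: "'d::finite \<Rightarrow> 'd \<Rightarrow> complex" and r :: "'e::finite \<Rightarrow> 'e \<Rightarrow> complex"
  assumes "orthonormal_basis r"
  shows "ptrans (meas_A_state s \<rho>) =
     mmult (mmult (basis_change_op s r) (ptrans (meas_A_state idop (in_basis s r \<rho>))))
       (adjoint (basis_change_op s r))"
proof (intro ext)
  fix x y :: "('d \<times> 'e) \<times> 'd"
  obtain a b k a' b' k' where "x = ((a, b), k)" and "y = ((a', b'), k')"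
    by (metis prod.exhaust)
  then show "ptrans (meas_A_state s \<rho>) x y =
      mmult (mmult (basis_change_op s r) (ptrans (meas_A_state idop (in_basis s r \<rho>))))
        (adjoint (basis_change_op s r)) x y"
    by (simp add: ptrans_def basis_change_op_conj_apply meas_A_state_idop_apply)
      (simp add: meas_A_state_apply in_basis_idop_right_expand[OF assms] sum_distrib_left mult_ac)
qed

lemma partial_monomial_ptrans_meas_AB_state_idop:
  "partial_monomial (ptrans (meas_AB_state idop idop \<rho>))"
  unfolding partial_monomial_def
  by (simp add: split_paired_All ptrans_def meas_AB_state_idop_apply)

lemma entrywise_l1_ptrans_meas_AB_state_idop:
  "entrywise_l1 (ptrans (meas_AB_state idop idop \<rho>)) = entrywise_l1 \<rho>"
  by (simp add: entrywise_l1_def sum_UNIV_prod ptrans_def meas_AB_state_idop_apply)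

lemma entrywise_l1_ptrans_meas_A_state_idop:
  "entrywise_l1 (ptrans (meas_A_state idop \<rho>)) = entrywise_l1 \<rho>"
  by (simp add: entrywise_l1_def sum_UNIV_prod ptrans_def meas_A_state_idop_apply)

theorem trace_norm_ptrans_meas_AB_state:
  assumes "orthonormal_basis s" and "orthonormal_basis t"
  shows "trace_norm (ptrans (meas_AB_state s t \<rho>)) = entrywise_l1 (in_basis s t \<rho>)"
  unfolding ptrans_meas_AB_state_basis_change[of s t \<rho>]
  by (simp add: trace_norm_partial_monomial_conj[OF partial_monomial_ptrans_meas_AB_state_idop
      basis_change_op_isometry[OF assms]] entrywise_l1_ptrans_meas_AB_state_idop)

theorem trace_norm_ptrans_meas_A_state:
  assumes "orthonormal_basis s" and "orthonormal_basis r"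
    and "partial_monomial (ptrans (meas_A_state idop (in_basis s r \<rho>)))"
  shows "trace_norm (ptrans (meas_A_state s \<rho>)) = entrywise_l1 (in_basis s r \<rho>)"
  unfolding ptrans_meas_A_state_basis_change[OF assms(2), of s \<rho>]
  by (simp add: trace_norm_partial_monomial_conj[OF assms(3) basis_change_op_isometry[OF assms(1,2)]]
      entrywise_l1_ptrans_meas_A_state_idop)

section \<open>Werner states\<close>

lemma cinner_tensor: "cinner (tensor u v) (tensor u' v') = cinner u u' * cinner v v'"
  unfolding cinner_def tensor_def by (simp add: sum_UNIV_prod sum_product mult_ac)

lemma apply_op_swap_op_tensor: "apply_op swap_op (tensor u v) = tensor v u"
  unfolding apply_op_def swap_op_def tensor_def by (auto simp: fun_eq_iff sum_UNIV_prod)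

lemma in_basis_werner:
  fixes s t :: "'d::finite \<Rightarrow> 'd \<Rightarrow> complex"
  assumes "orthonormal_basis s" and "orthonormal_basis t"
  shows "in_basis s t (werner \<beta>) (k, l) (k', l') =
    ((if k = k' \<and> l = l' then 1 else 0) + \<beta> * (cinner (s k) (t l') * cinner (t l) (s k'))) /
      ((real CARD('d))\<^sup>2 + real CARD('d) * \<beta>)"
proof -
  define N where "N = complex_of_real ((real CARD('d))\<^sup>2 + real CARD('d) * \<beta>)"
  have werner: "(werner \<beta> :: ('d \<times> 'd, 'd \<times> 'd) op) x y = (idop x y + \<beta> * swap_op x y) / N" for x y
    unfolding werner_def N_def ..
  have "cinner u (apply_op (werner \<beta>) v) = (cinner u (apply_op idop v) + \<beta> * cinner u (apply_op swap_op v)) / N"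
    for u v :: "'d \<times> 'd \<Rightarrow> complex"
    unfolding cinner_def apply_op_def werner
    by (simp add: add_divide_distrib distrib_left distrib_right sum.distrib sum_divide_distrib
        sum_distrib_left mult_ac)
  then show ?thesis
    unfolding in_basis_def N_def[symmetric]
    by (simp add: apply_op_swap_op_tensor cinner_tensor orthonormal_basis_cinner assms)
qed

lemma in_basis_werner_self:
  fixes s :: "'d::finite \<Rightarrow> 'd \<Rightarrow> complex"
  assumes "orthonormal_basis s"
  shows "in_basis s s (werner \<beta>) = werner \<beta>"
proof (intro ext)
  fix x y :: "'d \<times> 'd"
  obtain k l k' l' where xy: "x = (k, l)" "y = (k', l')"
    by (metis prod.exhaust)
  show "in_basis s s (werner \<beta>) x y = werner \<beta> x y"
    unfolding xy in_basis_werner[OF assms assms] orthonormal_basis_cinner[OF assms]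
    by (simp add: werner_def idop_def swap_op_def)
qed

lemma werner_nonzero: "werner \<beta> (a, b) (c, e) \<noteq> 0 \<Longrightarrow> c = a \<and> e = b \<or> c = b \<and> e = a"
  by (auto simp: werner_def idop_def swap_op_def split: if_splits)

lemma partial_monomial_ptrans_meas_A_state_werner:
  "partial_monomial (ptrans (meas_A_state idop (werner \<beta>)))"
  unfolding partial_monomial_def
  by (simp add: ptrans_def meas_A_state_idop_apply) (auto dest!: werner_nonzero)

definition overlap_l1 :: "('d::finite \<Rightarrow> 'd \<Rightarrow> complex) \<Rightarrow> ('d \<Rightarrow> 'd \<Rightarrow> complex) \<Rightarrow> real" where
  "overlap_l1 s t = (\<Sum>k\<in>UNIV. \<Sum>n\<in>UNIV. cmod (cinner (s k) (t n)))"

lemma sum_overlap_power2: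
  fixes s t :: "'d::finite \<Rightarrow> 'd \<Rightarrow> complex"
  assumes "orthonormal_basis s" and "orthonormal_basis t"
  shows "(\<Sum>k\<in>UNIV. \<Sum>n\<in>UNIV. (cmod (cinner (s k) (t n)))\<^sup>2) = real CARD('d)"
proof -
  have "(\<Sum>k\<in>UNIV. \<Sum>n\<in>UNIV. (cmod (cinner (s k) (t n)))\<^sup>2) = (\<Sum>n\<in>(UNIV :: 'd set). 1)"
    by (subst sum.swap) (simp add: parseval[OF assms(1)] orthonormal_basis_norm[OF assms(2)])
  then show ?thesis by simp
qed

lemma overlap_l1_ge_card:
  assumes "orthonormal_basis s" and "orthonormal_basis t"
  shows "real CARD('d) \<le> overlap_l1 s (t :: 'd::finite \<Rightarrow> 'd \<Rightarrow> complex)"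
proof -
  have "(cmod (cinner (s k) (t n)))\<^sup>2 \<le> cmod (cinner (s k) (t n))" for k n
    using orthonormal_bases_overlap_le_1[OF assms] by (simp add: power2_eq_square mult_left_le)
  then show ?thesis
    unfolding overlap_l1_def sum_overlap_power2[OF assms, symmetric] by (intro sum_mono)
qed

lemma overlap_l1_self:
  "orthonormal_basis s \<Longrightarrow> overlap_l1 s (s :: 'd::finite \<Rightarrow> 'd \<Rightarrow> complex) = real CARD('d)"
  by (simp add: overlap_l1_def orthonormal_basis_cinner)

lemma norm_in_basis_werner:
  fixes s t :: "'d::finite \<Rightarrow> 'd \<Rightarrow> complex"
  assumes s: "orthonormal_basis s" and t: "orthonormal_basis t" and \<beta>: "\<bar>\<beta>\<bar> \<le> 1"
  shows "cmod (in_basis s t (werner \<beta>) (k, l) (k', l')) =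
    ((if k = k' \<and> l = l' then 1 + (\<beta> - \<bar>\<beta>\<bar>) * (cmod (cinner (s k) (t l)))\<^sup>2 else 0)
      + \<bar>\<beta>\<bar> * (cmod (cinner (s k) (t l')) * cmod (cinner (s k') (t l))))
      / \<bar>(real CARD('d))\<^sup>2 + real CARD('d) * \<beta>\<bar>"
proof -
  define x where "x k n = cmod (cinner (s k) (t n))" for k n
  have swap: "cinner (t n) (s m) = cnj (cinner (s m) (t n))" for m n
    by (simp only: cnj_cinner)
  have "cmod (in_basis s t (werner \<beta>) (k, l) (k', l')) =
      cmod ((if k = k' \<and> l = l' then 1 else 0) + \<beta> * (cinner (s k) (t l') * cinner (t l) (s k'))) / \<bar>(real CARD('d))\<^sup>2 + real CARD('d) * \<beta>\<bar>"
    unfolding in_basis_werner[OF s t] norm_divide norm_of_real ..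
  also have "cmod ((if k = k' \<and> l = l' then 1 else 0) + \<beta> * (cinner (s k) (t l') * cinner (t l) (s k')))
      = (if k = k' \<and> l = l' then 1 + (\<beta> - \<bar>\<beta>\<bar>) * (x k l)\<^sup>2 else 0) + \<bar>\<beta>\<bar> * (x k l' * x k' l)"
  proof (cases "k = k' \<and> l = l'")
    case True
    then have kl: "k' = k" "l' = l"
      by simp_all
    have "(x k l)\<^sup>2 \<le> 1"
      using orthonormal_bases_overlap_le_1[OF s t, of k l] by (simp add: x_def power_le_one)
    then have "\<bar>\<beta>\<bar> * (x k l)\<^sup>2 \<le> 1"
      using \<beta> by (simp add: mult_le_one)
    moreover have "- \<bar>\<beta>\<bar> * (x k l)\<^sup>2 \<le> \<beta> * (x k l)\<^sup>2"
      by (rule mult_right_mono) auto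
    ultimately have nonneg: "0 \<le> 1 + \<beta> * (x k l)\<^sup>2"
      by linarith
    have real: "1 + \<beta> * (cinner (s k) (t l) * cinner (t l) (s k)) = of_real (1 + \<beta> * (x k l)\<^sup>2)"
      by (simp add: swap x_def complex_norm_square del: of_real_power)
    show ?thesis
      unfolding kl by (simp only: simp_thms if_True real norm_of_real abs_of_nonneg[OF nonneg])
        (simp add: power2_eq_square algebra_simps)
  next
    case False
    then show ?thesis
      by (simp add: swap norm_mult x_def)
  qed
  finally show ?thesis
    unfolding x_def .
qed

lemma entrywise_l1_in_basis_werner:
  fixes s t :: "'d::finite \<Rightarrow> 'd \<Rightarrow> complex"
  assumes s: "orthonormal_basis s" and t: "orthonormal_basis t" and \<beta>: "\<bar>\<beta>\<bar> \<le> 1"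
  shows "entrywise_l1 (in_basis s t (werner \<beta>)) =
    ((real CARD('d))\<^sup>2 + (\<beta> - \<bar>\<beta>\<bar>) * real CARD('d) + \<bar>\<beta>\<bar> * (overlap_l1 s t)\<^sup>2)
      / \<bar>(real CARD('d))\<^sup>2 + real CARD('d) * \<beta>\<bar>"
proof -
  define N where "N = (real CARD('d))\<^sup>2 + real CARD('d) * \<beta>"
  define x where "x k n = cmod (cinner (s k) (t n))" for k n
  have entry: "cmod (in_basis s t (werner \<beta>) (k, l) (k', l')) =
      ((if k = k' \<and> l = l' then 1 + (\<beta> - \<bar>\<beta>\<bar>) * (x k l)\<^sup>2 else 0) + \<bar>\<beta>\<bar> * (x k l' * x k' l)) / \<bar>N\<bar>"
    for k l k' l'
    unfolding norm_in_basis_werner[OF s t \<beta>] x_def N_def ..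
  have "entrywise_l1 (in_basis s t (werner \<beta>)) =
      (\<Sum>k\<in>UNIV. \<Sum>l\<in>UNIV. \<Sum>k'\<in>UNIV. \<Sum>l'\<in>UNIV.
        (if k = k' \<and> l = l' then 1 + (\<beta> - \<bar>\<beta>\<bar>) * (x k l)\<^sup>2 else 0) + \<bar>\<beta>\<bar> * (x k l' * x k' l)) / \<bar>N\<bar>"
    by (simp add: entrywise_l1_def sum_UNIV_prod entry flip: sum_divide_distrib)
  also have "\<dots> = ((\<Sum>k\<in>UNIV. \<Sum>l\<in>UNIV. 1 + (\<beta> - \<bar>\<beta>\<bar>) * (x k l)\<^sup>2)
      + \<bar>\<beta>\<bar> * (\<Sum>k\<in>UNIV. \<Sum>l\<in>UNIV. \<Sum>k'\<in>UNIV. \<Sum>l'\<in>UNIV. x k l' * x k' l)) / \<bar>N\<bar>"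
    by (simp add: sum.distrib sum_distrib_left)
  also have "\<dots> = ((real CARD('d))\<^sup>2 + (\<beta> - \<bar>\<beta>\<bar>) * real CARD('d)
      + \<bar>\<beta>\<bar> * (\<Sum>k\<in>UNIV. \<Sum>n\<in>UNIV. x k n)\<^sup>2) / \<bar>N\<bar>"
    using sum_overlap_power2[OF s t]
    by (simp add: sum.distrib sum_cross_products_eq_square x_def power2_eq_square flip: sum_distrib_left)
  finally show ?thesis
    by (simp add: N_def x_def overlap_l1_def)
qed
lemma negativity_meas_AB_state_werner:
  fixes s t :: "'d::finite \<Rightarrow> 'd \<Rightarrow> complex"
  assumes s: "orthonormal_basis s" and t: "orthonormal_basis t"
    and d: "CARD('d) \<ge> 2" and \<beta>: "\<bar>\<beta>\<bar> \<le> 1"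
  shows "negativity (meas_AB_state s t (werner \<beta>)) =
    \<bar>\<beta>\<bar> * ((overlap_l1 s t)\<^sup>2 - real CARD('d)) / (2 * (real CARD('d) * (real CARD('d) + \<beta>)))"
proof -
  have "0 < real CARD('d) * (real CARD('d) + \<beta>)"
    using d \<beta> by (intro mult_pos_pos) auto
  then show ?thesis
    unfolding negativity_def trace_norm_ptrans_meas_AB_state[OF s t] entrywise_l1_in_basis_werner[OF s t \<beta>]
    by (simp add: power2_eq_square field_simps)
qed

lemma negativity_meas_AB_state_werner_same_basis:
  fixes s :: "'d::finite \<Rightarrow> 'd \<Rightarrow> complex"
  assumes "orthonormal_basis s" and "CARD('d) \<ge> 2" and "\<bar>\<beta>\<bar> \<le> 1"
  shows "negativity (meas_AB_state s s (werner \<beta>)) =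
    \<bar>\<beta>\<bar> * (real CARD('d) - 1) / (2 * (real CARD('d) + \<beta>))"
proof -
  define d where "d = real CARD('d)"
  have "negativity (meas_AB_state s s (werner \<beta>)) = d * (\<bar>\<beta>\<bar> * (d - 1)) / (d * (2 * (d + \<beta>)))"
    by (simp add: negativity_meas_AB_state_werner[OF assms(1,1,2,3)] overlap_l1_self[OF assms(1)]
        d_def power2_eq_square algebra_simps)
  also have "\<dots> = \<bar>\<beta>\<bar> * (d - 1) / (2 * (d + \<beta>))"
    using assms(2) by (simp add: d_def)
  finally show ?thesis
    by (simp add: d_def)
qed

lemma negativity_meas_AB_state_werner_ge:
  fixes s t :: "'d::finite \<Rightarrow> 'd \<Rightarrow> complex"
  assumes s: "orthonormal_basis s" and t: "orthonormal_basis t"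
    and d: "CARD('d) \<ge> 2" and \<beta>: "\<bar>\<beta>\<bar> \<le> 1"
  shows "\<bar>\<beta>\<bar> * (real CARD('d) - 1) / (2 * (real CARD('d) + \<beta>)) \<le> negativity (meas_AB_state s t (werner \<beta>))"
proof -
  have "(overlap_l1 s s)\<^sup>2 \<le> (overlap_l1 s t)\<^sup>2"
    using overlap_l1_ge_card[OF s t] by (simp add: overlap_l1_self[OF s] power_mono)
  moreover have "0 < real CARD('d) * (real CARD('d) + \<beta>)"
    using d \<beta> by (intro mult_pos_pos) auto
  ultimately have "negativity (meas_AB_state s s (werner \<beta>)) \<le> negativity (meas_AB_state s t (werner \<beta>))"
    unfolding negativity_meas_AB_state_werner[OF s s d \<beta>] negativity_meas_AB_state_werner[OF s t d \<beta>]
    by (intro divide_right_mono mult_left_mono) auto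
  then show ?thesis
    by (simp add: negativity_meas_AB_state_werner_same_basis[OF s d \<beta>])
qed

lemma negativity_meas_A_state_werner:
  fixes s :: "'d::finite \<Rightarrow> 'd \<Rightarrow> complex"
  assumes "orthonormal_basis s"
  shows "negativity (meas_A_state s (werner \<beta>)) = negativity (meas_AB_state s s (werner \<beta>))"
proof -
  have "partial_monomial (ptrans (meas_A_state idop (in_basis s s (werner \<beta>))))"
    by (simp add: in_basis_werner_self[OF assms] partial_monomial_ptrans_meas_A_state_werner)
  then show ?thesis
    by (simp add: negativity_def trace_norm_ptrans_meas_A_state[OF assms assms]
        trace_norm_ptrans_meas_AB_state[OF assms assms])
qed

lemma cINF_eq_attained:
  fixes f :: "'a \<Rightarrow> 'b::conditionally_complete_lattice"
  assumes "x \<in> A" and "f x = c" and "\<And>y. y \<in> A \<Longrightarrow> c \<le> f y"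
  shows "(INF y\<in>A. f y) = c"
  using assms by (intro cInf_eq_minimum) auto

theorem theorem13:
  fixes \<beta> :: real
  assumes "CARD('d::finite) \<ge> 2" and "\<bar>\<beta>\<bar> \<le> 1"
  shows "QA_neg (werner \<beta> :: ('d \<times> 'd, 'd \<times> 'd) op) =
           \<bar>\<beta>\<bar> * (real CARD('d) - 1) / (2 * (real CARD('d) + \<beta>))
       \<and> QAB_neg (werner \<beta> :: ('d \<times> 'd, 'd \<times> 'd) op) =
           \<bar>\<beta>\<bar> * (real CARD('d) - 1) / (2 * (real CARD('d) + \<beta>))"
proof
  show "QA_neg (werner \<beta> :: ('d \<times> 'd, 'd \<times> 'd) op) =
      \<bar>\<beta>\<bar> * (real CARD('d) - 1) / (2 * (real CARD('d) + \<beta>))"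
    unfolding QA_neg_def
    by (rule cINF_eq_attained[of idop])
      (simp_all add: orthonormal_basis_idop negativity_meas_A_state_werner
        negativity_meas_AB_state_werner_same_basis assms)
  show "QAB_neg (werner \<beta> :: ('d \<times> 'd, 'd \<times> 'd) op) =
      \<bar>\<beta>\<bar> * (real CARD('d) - 1) / (2 * (real CARD('d) + \<beta>))"
    unfolding QAB_neg_def
    by (rule cINF_eq_attained[of "(idop, idop)"])
      (use negativity_meas_AB_state_werner_ge[OF _ _ assms] in
        \<open>auto simp: orthonormal_basis_idop negativity_meas_AB_state_werner_same_basis assms\<close>)
qed

end
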